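(* Let $G$ be a finitely generated group and $S$ a finite generating set of $G$ closed under inverses, and let $\Delta(n)=\Delta_S(n)$ be as defined in the context. Then $\Delta(n)\le \lceil n/3\rceil$ for all $n\ge 1$. Moreover, if there is $N$ such that $\Delta(n)<\lceil n/3\rceil$ for all $n\ge N$, then $G$ is finitely presented and satisfies an exponential isoperimetric inequality: there is a finite presentation $\langle S\mid \mathcal R\rangle$ of $G$ and a constant $c$ such that every word $w$ in $S$ of length $n$ representing the identity of $G$ is freely equivalent to a product of at most $c^n$ conjugates of elements of $\mathcal R$ and their inverses.
   Context: Let $G$ be a finitely generated group, $S$ a finite generating set closed under inverses, and $\Gamma$ the Cayley diagram (there is an edge labelled $s$ from $g$ to $gs$ for $g\in G$, $s\in S$). The word metric $d(g,g')$ is the length of a shortest word in $S$ representing $g^{-1}g'$. A path of length $n\ge1$ in $\Gamma$ is a sequence $g_0,\dots,g_n$ of group elements with an edge of $\Gamma$ from each $g_{i-1}$ to $g_i$; it is a cycle if $g_n=g_0$. A (diagonal) triangulation of a circle in the plane is obtained by distinguishing one or more points on the circle and joining some of them by chords such that (1) no two chords meet in the interior of the circle, (2) the interior is divided into triangles, (3) each arc of the circle between two neighbouring distinguished points is one side of a triangle; circles with one, two or three distinguished points count as triangulated with no chords. A triangulation of a cycle $g_0,\dots,g_n$ in $\Gamma$ is a triangulation of a circle with distinguished points $p_1,\dots,p_n$, labelled $g_1,\dots,g_n$ in counterclockwise order. The length of a chord with endpoints $p_i,p_j$ is $d(g_i,g_j)$. A $k$-triangulation is one in which all chords have length at most $k$.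 $\Delta(n)=\Delta_S(n)$ is the least $k$ such that every cycle in $\Gamma$ of length at most $n$ has a $k$-triangulation (so $\Delta(n)=0$ for $1\le n\le3$). $\lceil x\rceil$ is the least integer not less than $x$. *)

theory Defs
  imports "HOL-Algebra.Group" "HOL-Algebra.Generated_Groups" Complex_Main
begin

definition word_val :: "('a, 'b) monoid_scheme \<Rightarrow> 'a list \<Rightarrow> 'a" where
  "word_val G w = foldr (\<lambda>x acc. x \<otimes>\<^bsub>G\<^esub> acc) w \<one>\<^bsub>G\<^esub>"

definition word_dist :: "('a, 'b) monoid_scheme \<Rightarrow> 'a set \<Rightarrow> 'a \<Rightarrow> 'a \<Rightarrow> nat" where
  "word_dist G S g g' = (LEAST n. \<exists>w. w \<in> lists S \<and> length w = n \<and>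
      word_val G w = inv\<^bsub>G\<^esub> g \<otimes>\<^bsub>G\<^esub> g')"

definition is_cycle :: "('a, 'b) monoid_scheme \<Rightarrow> 'a set \<Rightarrow> (nat \<Rightarrow> 'a) \<Rightarrow> nat \<Rightarrow> bool" where
  "is_cycle G S g n \<longleftrightarrow> n \<ge> 1 \<and> (\<forall>i\<le>n. g i \<in> carrier G) \<and>
      (\<forall>i\<in>{1..n}. \<exists>s\<in>S. g i = g (i - 1) \<otimes>\<^bsub>G\<^esub> s) \<and> g n = g 0"

text \<open>tri vs T: T is the set of chords of a diagonal triangulation of the circle whose
  distinguished points, in cyclic order, are vs. A circle with at most three points has no chords;
  otherwise the arc between the last and the first point is a side of a triangle with third vertex
  the k-th point (0 < k < m-1); the chords are the other two sides of that triangle (unless they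
  are arcs) together with triangulations of the two remaining pieces.\<close>
inductive tri :: "nat list \<Rightarrow> (nat \<times> nat) set \<Rightarrow> bool" where
  small: "length vs \<le> 3 \<Longrightarrow> tri vs {}"
| split: "\<lbrakk> 4 \<le> length vs; 0 < k; k < length vs - 1;
            tri (take (Suc k) vs) A; tri (drop k vs) B \<rbrakk> \<Longrightarrow>
          tri vs (A \<union> B \<union> (if 2 \<le> k then {(vs ! 0, vs ! k)} else {})
                        \<union> (if k + 2 < length vs then {(vs ! k, vs ! (length vs - 1))} else {}))"

text \<open>A k-triangulation of the cycle g_0,...,g_n: a triangulation of the circle with points
  p_1..p_n (labelled g_1..g_n) all of whose chords have length at most k.\<close>
definition has_k_triangulation ::
    "('a, 'b) monoid_scheme \<Rightarrow> 'a set \<Rightarrow> nat \<Rightarrow> (nat \<Rightarrow> 'a) \<Rightarrow> nat \<Rightarrow> bool" where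
  "has_k_triangulation G S k g n \<longleftrightarrow>
     (\<exists>T. tri [1..<Suc n] T \<and> (\<forall>(i, j)\<in>T. word_dist G S (g i) (g j) \<le> k))"

definition Delta :: "('a, 'b) monoid_scheme \<Rightarrow> 'a set \<Rightarrow> nat \<Rightarrow> nat" where
  "Delta G S n = (LEAST k. \<forall>m g. 1 \<le> m \<and> m \<le> n \<and> is_cycle G S g m \<longrightarrow>
                                    has_k_triangulation G S k g m)"

text \<open>Letters of the free group on S: (s, True) is s, (s, False) is its formal inverse.\<close>
type_synonym 'a fword = "('a \<times> bool) list"

definition fword_inv :: "'a fword \<Rightarrow> 'a fword" where
  "fword_inv w = rev (map (\<lambda>(a, b). (a, \<not> b)) w)"

definition fword_val :: "('a, 'b) monoid_scheme \<Rightarrow> 'a fword \<Rightarrow> 'a" where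
  "fword_val G w = foldr (\<lambda>(a, b) acc. (if b then a else inv\<^bsub>G\<^esub> a) \<otimes>\<^bsub>G\<^esub> acc) w \<one>\<^bsub>G\<^esub>"

definition free_step :: "('a fword \<times> 'a fword) set" where
  "free_step = {(xs @ [(a, b), (a, \<not> b)] @ ys, xs @ ys) | xs ys a b. True}"

definition free_equiv :: "'a fword \<Rightarrow> 'a fword \<Rightarrow> bool" where
  "free_equiv u v \<longleftrightarrow> (u, v) \<in> (free_step \<union> free_step\<inverse>)\<^sup>*"

text \<open>Product of conjugates u r^{\<plusminus>1} u^{-1}; each entry is (conjugator u, relator r, sign).\<close>
definition conj_prod :: "('a fword \<times> 'a fword \<times> bool) list \<Rightarrow> 'a fword" where
  "conj_prod cs = concat (map (\<lambda>(u, r, e). u @ (if e then r else fword_inv r) @ fword_inv u) cs)"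

definition conj_list_over :: "'a set \<Rightarrow> 'a fword set \<Rightarrow> ('a fword \<times> 'a fword \<times> bool) list \<Rightarrow> bool" where
  "conj_list_over S R cs \<longleftrightarrow> (\<forall>(u, r, e)\<in>set cs. u \<in> lists (S \<times> UNIV) \<and> r \<in> R)"

text \<open>\<langle>S | R\<rangle> is a presentation of G (S a generating set of G): the relators are words in the
  free group on S that are trivial in G, and every word trivial in G lies in the normal closure
  of R, i.e. is freely equivalent to a product of conjugates of relators and their inverses.\<close>
definition is_presentation :: "('a, 'b) monoid_scheme \<Rightarrow> 'a set \<Rightarrow> 'a fword set \<Rightarrow> bool" where
  "is_presentation G S R \<longleftrightarrow>
     R \<subseteq> lists (S \<times> UNIV) \<and> (\<forall>r\<in>R. fword_val G r = \<one>\<^bsub>G\<^esub>) \<and>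
     (\<forall>w\<in>lists (S \<times> UNIV). fword_val G w = \<one>\<^bsub>G\<^esub> \<longrightarrow>
        (\<exists>cs. conj_list_over S R cs \<and> free_equiv w (conj_prod cs)))"

end

theory Submission
  imports Defs
begin

text \<open>
  Upper bound: put q = \<lceil>m/3\<rceil> for a cycle g_1, ..., g_m. The triangle on the points 1, q + 1
  and m + 1 - q has sides of length at most q and cuts off three arcs with at most q edges each;
  any two points on such an arc are at distance at most q, so every triangulation of the arc will do.

  Isoperimetric inequality: if \<Delta>(n) < \<lceil>n/3\<rceil> for n > M, the cycle of prefixes of a loop w of
  length n > M has a triangulation with chords of length less than n/3. Some triangle of it cuts
  the cycle into three arcs of length at most n/2; its sides are chords or single edges, hence
  labelled by words u, v, t of length e < n/3. Cutting w along u, v and t writes it, up to free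
  equivalence and conjugation, as a product of four loops of length at most n/2 + e < n. By
  induction, a loop of length n is a product of at most 4^n conjugates of the relators of length
  at most M.
\<close>

section \<open>Words and free equivalence\<close>

definition letter_val :: "('a, 'b) monoid_scheme \<Rightarrow> 'a \<times> bool \<Rightarrow> 'a" where
  "letter_val G x = (if snd x then fst x else inv\<^bsub>G\<^esub> (fst x))"

lemma word_val_Nil [simp]: "word_val G [] = \<one>\<^bsub>G\<^esub>"
  by (simp add: word_val_def)

lemma word_val_Cons [simp]: "word_val G (x # xs) = x \<otimes>\<^bsub>G\<^esub> word_val G xs"
  by (simp add: word_val_def)

lemma fword_val_Nil [simp]: "fword_val G [] = \<one>\<^bsub>G\<^esub>"
  by (simp add: fword_val_def)

lemma fword_val_Cons [simp]: "fword_val G (x # xs) = letter_val G x \<otimes>\<^bsub>G\<^esub> fword_val G xs"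
  by (cases x) (simp add: fword_val_def letter_val_def)

lemma fword_inv_Nil [simp]: "fword_inv [] = []"
  by (simp add: fword_inv_def)

lemma fword_inv_Cons [simp]: "fword_inv (x # xs) = fword_inv xs @ [(fst x, \<not> snd x)]"
  by (cases x) (simp add: fword_inv_def)

lemma fword_inv_append [simp]: "fword_inv (xs @ ys) = fword_inv ys @ fword_inv xs"
  by (simp add: fword_inv_def)

lemma fword_inv_fword_inv [simp]: "fword_inv (fword_inv xs) = xs"
  by (induction xs) auto

lemma length_fword_inv [simp]: "length (fword_inv xs) = length xs"
  by (simp add: fword_inv_def)

lemma fword_inv_in_lists [simp]: "fword_inv xs \<in> lists (S \<times> UNIV) \<longleftrightarrow> xs \<in> lists (S \<times> UNIV)"
  by (auto simp: fword_inv_def)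

lemma free_equiv_refl [simp]: "free_equiv u u"
  by (simp add: free_equiv_def)

lemma free_equiv_sym: "free_equiv u v \<Longrightarrow> free_equiv v u"
  unfolding free_equiv_def by (meson sym_Un_converse sym_rtrancl symD)

lemma free_equiv_trans [trans]: "free_equiv u v \<Longrightarrow> free_equiv v w \<Longrightarrow> free_equiv u w"
  unfolding free_equiv_def by (rule rtrancl_trans)

lemma free_step_context: "(u, v) \<in> free_step \<Longrightarrow> (x @ u @ y, x @ v @ y) \<in> free_step"
  unfolding free_step_def by (auto, metis append.assoc)

lemma free_equiv_context: "free_equiv u v \<Longrightarrow> free_equiv (x @ u @ y) (x @ v @ y)"
  unfolding free_equiv_def
proof (induction rule: rtrancl_induct)
  case (step v w)
  then have "(x @ v @ y, x @ w @ y) \<in> free_step \<union> free_step\<inverse>"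
    using free_step_context by blast
  with step.IH show ?case by (rule rtrancl_into_rtrancl)
qed simp

lemma free_equiv_append: "free_equiv u u' \<Longrightarrow> free_equiv v v' \<Longrightarrow> free_equiv (u @ v) (u' @ v')"
  using free_equiv_context[of u u' "[]" v] free_equiv_context[of v v' u' "[]"]
  by (auto intro: free_equiv_trans)

lemma free_equiv_cancel_self: "free_equiv (u @ fword_inv u) []"
proof (induction u)
  case (Cons c u)
  have "([(fst c, snd c), (fst c, \<not> snd c)], []) \<in> free_step"
    unfolding free_step_def
    by (intro CollectI exI[of _ "[]"] exI[of _ "[]"] exI[of _ "fst c"] exI[of _ "snd c"]) simp
  then have "free_equiv ([c] @ [] @ [(fst c, \<not> snd c)]) []"
    by (auto simp: free_equiv_def)
  with free_equiv_context[OF Cons.IH, of "[c]" "[(fst c, \<not> snd c)]"] show ?case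
    by (auto intro: free_equiv_trans)
qed simp

lemma free_equiv_cancel: "free_equiv (x @ u @ fword_inv u @ y) (x @ y)"
  using free_equiv_context[OF free_equiv_cancel_self] by fastforce

lemma free_equiv_cancel': "free_equiv (x @ fword_inv u @ u @ y) (x @ y)"
  using free_equiv_cancel[of x "fword_inv u" y] by simp

lemma conj_prod_Nil [simp]: "conj_prod [] = []"
  by (simp add: conj_prod_def)

lemma conj_prod_Cons [simp]:
  "conj_prod ((u, r, e) # cs) = u @ (if e then r else fword_inv r) @ fword_inv u @ conj_prod cs"
  by (simp add: conj_prod_def)

lemma conj_prod_append [simp]: "conj_prod (cs @ ds) = conj_prod cs @ conj_prod ds"
  by (simp add: conj_prod_def)

lemma conj_prod_conjugate:
  "free_equiv (conj_prod (map (\<lambda>(u, r, e). (x @ u, r, e)) cs)) (x @ conj_prod cs @ fword_inv x)"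
proof (induction cs)
  case Nil
  show ?case
    using free_equiv_sym[OF free_equiv_cancel[of "[]" x "[]"]] by simp
next
  case (Cons c cs)
  obtain u r e where c: "c = (u, r, e)"
    by (cases c)
  define p where "p = u @ (if e then r else fword_inv r) @ fword_inv u"
  have "free_equiv (conj_prod (map (\<lambda>(u, r, e). (x @ u, r, e)) (c # cs)))
      (x @ p @ fword_inv x @ x @ conj_prod cs @ fword_inv x)"
    using free_equiv_context[OF Cons.IH, of "x @ p @ fword_inv x" "[]"] by (simp add: c p_def)
  also have "free_equiv \<dots> (x @ p @ conj_prod cs @ fword_inv x)"
    using free_equiv_cancel'[of "x @ p" x] by simp
  finally show ?case
    by (simp add: c p_def)
qed

definition area_le :: "'a set \<Rightarrow> 'a fword set \<Rightarrow> 'a fword \<Rightarrow> nat \<Rightarrow> bool" where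
  "area_le S R w k \<longleftrightarrow> (\<exists>cs. conj_list_over S R cs \<and> length cs \<le> k \<and> free_equiv w (conj_prod cs))"

lemma area_le_free_equiv: "free_equiv w w' \<Longrightarrow> area_le S R w k \<Longrightarrow> area_le S R w' k"
  unfolding area_le_def by (meson free_equiv_sym free_equiv_trans)

lemma area_le_mono: "area_le S R w k \<Longrightarrow> k \<le> k' \<Longrightarrow> area_le S R w k'"
  unfolding area_le_def by (meson le_trans)

lemma area_le_relator: "r \<in> R \<Longrightarrow> area_le S R r 1"
  unfolding area_le_def conj_list_over_def by (intro exI[of _ "[([], r, True)]"]) simp

lemma area_le_append:
  assumes "area_le S R u k" and "area_le S R v j"
  shows "area_le S R (u @ v) (k + j)"
proof -
  obtain cs where "conj_list_over S R cs" "length cs \<le> k" "free_equiv u (conj_prod cs)"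
    using assms(1) by (auto simp: area_le_def)
  moreover obtain ds where "conj_list_over S R ds" "length ds \<le> j" "free_equiv v (conj_prod ds)"
    using assms(2) by (auto simp: area_le_def)
  ultimately show ?thesis
    unfolding area_le_def
    by (intro exI[of _ "cs @ ds"]) (simp add: conj_list_over_def ball_Un free_equiv_append)
qed

lemma area_le_conjugate:
  assumes "x \<in> lists (S \<times> UNIV)" and "area_le S R w k"
  shows "area_le S R (x @ w @ fword_inv x) k"
proof -
  obtain cs where cs: "conj_list_over S R cs" "length cs \<le> k" "free_equiv w (conj_prod cs)"
    using assms(2) by (auto simp: area_le_def)
  let ?cs = "map (\<lambda>(u, r, e). (x @ u, r, e)) cs"
  have "conj_list_over S R ?cs"
    using cs(1) assms(1) unfolding conj_list_over_def by (simp add: split_beta)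
  moreover have "free_equiv (x @ w @ fword_inv x) (conj_prod ?cs)"
    using free_equiv_context[OF cs(3)] free_equiv_sym[OF conj_prod_conjugate]
    by (rule free_equiv_trans)
  ultimately show ?thesis
    using cs(2) unfolding area_le_def by (intro exI[of _ ?cs]) simp
qed

lemma area_le_rotate:
  assumes "x \<in> lists (S \<times> UNIV)" and "area_le S R (w @ x) k"
  shows "area_le S R (x @ w) k"
  using area_le_conjugate[OF assms] free_equiv_cancel[of "x @ w" x "[]"]
    area_le_free_equiv[of "x @ w @ x @ fword_inv x" "x @ w"]
  by simp

text \<open>Cutting a disc along a chord m: a b is freely equal to (a m^-1)(m b).\<close>
lemma area_le_cut:
  assumes "area_le S R (a @ fword_inv m) k" and "area_le S R (m @ b) j"
  shows "area_le S R (a @ b) (k + j)"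
  using area_le_append[OF assms] free_equiv_cancel'[of a m b]
    area_le_free_equiv[of "a @ fword_inv m @ m @ b" "a @ b"]
  by simp

lemma area_le_triangle:
  assumes lists: "w1 \<in> lists (S \<times> UNIV)" "u \<in> lists (S \<times> UNIV)" "v \<in> lists (S \<times> UNIV)"
    and "area_le S R (w2 @ fword_inv u) k1" "area_le S R (w3 @ fword_inv v) k2"
    and "area_le S R (w4 @ w1 @ fword_inv t) k3" "area_le S R (t @ u @ v) k4"
  shows "area_le S R (w1 @ w2 @ w3 @ w4) (k1 + k2 + k3 + k4)"
proof -
  have "area_le S R ((w4 @ w1) @ u @ v) (k3 + k4)"
    using area_le_cut[of S R "w4 @ w1" t k3 "u @ v" k4] assms(6,7) by simp
  then have "area_le S R (v @ w4 @ w1 @ u) (k3 + k4)"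
    using area_le_rotate[of v S R "w4 @ w1 @ u"] lists(3) by simp
  then have "area_le S R (w3 @ w4 @ w1 @ u) (k2 + (k3 + k4))"
    using area_le_cut[of S R w3 v k2 "w4 @ w1 @ u"] assms(5) by simp
  then have "area_le S R (u @ w3 @ w4 @ w1) (k2 + (k3 + k4))"
    using area_le_rotate[of u S R "w3 @ w4 @ w1"] lists(2) by simp
  then have "area_le S R (w2 @ w3 @ w4 @ w1) (k1 + (k2 + (k3 + k4)))"
    using area_le_cut[of S R w2 u k1 "w3 @ w4 @ w1"] assms(4) by simp
  then have "area_le S R (w1 @ w2 @ w3 @ w4) (k1 + (k2 + (k3 + k4)))"
    using area_le_rotate[of w1 S R "w2 @ w3 @ w4"] lists(1) by simp
  then show ?thesis
    by (simp add: add.assoc)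
qed

lemma area_le_real_power:
  "area_le S R w (b ^ n) \<Longrightarrow>
    \<exists>cs. conj_list_over S R cs \<and> real (length cs) \<le> real b ^ n \<and> free_equiv w (conj_prod cs)"
  unfolding area_le_def by (metis of_nat_le_iff of_nat_power)

section \<open>Triangulations of polygons\<close>

lemma tri_exists: "\<exists>T. tri vs T"
proof (induction "length vs" arbitrary: vs rule: less_induct)
  case less
  show ?case
  proof (cases "length vs \<le> 3")
    case True
    then show ?thesis
      using tri.small by blast
  next
    case False
    obtain B where "tri (drop 1 vs) B"
      using less False by fastforce
    moreover have "tri (take 2 vs) {}"
      by (rule tri.small) simp
    ultimately have "tri vs ({} \<union> B \<union> (if 2 \<le> (1::nat) then {(vs ! 0, vs ! 1)} else {})
        \<union> (if 1 + 2 < length vs then {(vs ! 1, vs ! (length vs - 1))} else {}))"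
      using False by (intro tri.split) (auto simp: numeral_2_eq_2)
    then show ?thesis
      by blast
  qed
qed

lemma tri_chords_subset: "tri vs T \<Longrightarrow> T \<subseteq> set vs \<times> set vs"
proof (induction rule: tri.induct)
  case (split vs k A B)
  have "set (take (Suc k) vs) \<subseteq> set vs" "set (drop k vs) \<subseteq> set vs"
    by (auto dest: in_set_takeD in_set_dropD)
  moreover have "vs ! 0 \<in> set vs" "vs ! k \<in> set vs" "vs ! (length vs - 1) \<in> set vs"
    using split.hyps by (auto intro!: nth_mem)
  ultimately show ?case
    using split.IH by auto
qed simp

lemma tri_upt_split:
  assumes "lo < m" "m < hi" "3 \<le> hi - lo"
    and "tri [lo..<Suc m] A" "tri [m..<Suc hi] B"
  shows "tri [lo..<Suc hi]
    (A \<union> B \<union> (if lo + 2 \<le> m then {(lo, m)} else {}) \<union> (if m + 2 \<le> hi then {(m, hi)} else {}))"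
proof -
  let ?vs = "[lo..<Suc hi]" and ?k = "m - lo"
  have "take (Suc ?k) ?vs = [lo..<Suc m]" "drop ?k ?vs = [m..<Suc hi]"
    using assms(1,2) by (simp_all add: take_upt drop_upt del: upt_Suc)
  then have split: "tri ?vs (A \<union> B \<union> (if 2 \<le> ?k then {(?vs ! 0, ?vs ! ?k)} else {})
      \<union> (if ?k + 2 < length ?vs then {(?vs ! ?k, ?vs ! (length ?vs - 1))} else {}))"
    using assms by (intro tri.split) (simp_all del: upt_Suc)
  have "?vs ! 0 = lo" "?vs ! ?k = m" "?vs ! (length ?vs - 1) = hi"
    using assms(1,2) by (simp_all add: nth_upt del: upt_Suc)
  moreover have "(2 \<le> ?k) = (lo + 2 \<le> m)" "(?k + 2 < length ?vs) = (m + 2 \<le> hi)"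
    using assms(1,2) by auto
  ultimately show ?thesis
    using split by (simp only:)
qed

definition tri_edge :: "(nat \<times> nat) set \<Rightarrow> nat \<Rightarrow> nat \<Rightarrow> nat \<Rightarrow> nat \<Rightarrow> bool" where
  "tri_edge T lo hi a b \<longleftrightarrow> (a, b) \<in> T \<or> (a = lo \<and> b = hi) \<or> b = Suc a"

definition central_triangle :: "(nat \<times> nat) set \<Rightarrow> nat \<Rightarrow> nat \<Rightarrow> nat \<Rightarrow> bool" where
  "central_triangle T lo hi n \<longleftrightarrow> (\<exists>x y z. lo \<le> x \<and> x < y \<and> y < z \<and> z \<le> hi \<and>
    2 * (y - x) \<le> n \<and> 2 * (z - y) \<le> n \<and> n \<le> 2 * (z - x) \<and>
    tri_edge T lo hi x y \<and> tri_edge T lo hi y z \<and> tri_edge T lo hi x z)"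

lemma central_triangle_mono:
  assumes "central_triangle A lo' hi' n" "A \<subseteq> T" "(lo', hi') \<in> T" "lo \<le> lo'" "hi' \<le> hi"
  shows "central_triangle T lo hi n"
proof -
  have "tri_edge A lo' hi' a b \<Longrightarrow> tri_edge T lo hi a b" for a b
    using assms(2,3) unfolding tri_edge_def by blast
  with assms(1,4,5) show ?thesis
    unfolding central_triangle_def by (meson le_trans)
qed

text \<open>The polygon lo, ..., hi is an arc of a cycle of length n, and the arcs cut off by the
  triangle are measured in that cycle; this is what makes the induction into sub-polygons work.\<close>
lemma tri_central_triangle:
  assumes "tri vs T" "vs = [lo..<Suc hi]" "2 \<le> hi - lo" "hi - lo \<le> n" "n \<le> 2 * (hi - lo)"
  shows "central_triangle T lo hi n"
  using assms
proof (induction arbitrary: lo hi rule: tri.induct)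
  case (small vs)
  then have "hi = lo + 2"
    by (simp del: upt_Suc)
  then show ?case
    using small.prems unfolding central_triangle_def
    by (intro exI[of _ lo] exI[of _ "Suc lo"] exI[of _ "Suc (Suc lo)"]) (auto simp: tri_edge_def)
next
  case (split vs k A B)
  define L m where "L = hi - lo" and "m = lo + k"
  have len: "length vs = Suc L" and "0 < k" "k < L" "lo + L = hi"
    using split.hyps split.prems unfolding L_def by (auto simp del: upt_Suc)
  have nth: "vs ! 0 = lo" "vs ! k = m" "vs ! (length vs - 1) = hi"
    using split.prems \<open>k < L\<close> \<open>lo + L = hi\<close> len
    by (simp_all add: m_def nth_upt del: upt_Suc)
  have pieces: "take (Suc k) vs = [lo..<Suc m]" "drop k vs = [m..<Suc hi]"
    using split.prems \<open>k < L\<close> \<open>lo + L = hi\<close> by (simp_all add: m_def take_upt drop_upt del: upt_Suc)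
  define U where "U = A \<union> B \<union> (if 2 \<le> k then {(vs ! 0, vs ! k)} else {})
    \<union> (if k + 2 < length vs then {(vs ! k, vs ! (length vs - 1))} else {})"
  have "A \<subseteq> U" "B \<subseteq> U"
    by (auto simp: U_def)
  have left: "2 \<le> k \<Longrightarrow> (lo, m) \<in> U" and right: "k + 2 \<le> L \<Longrightarrow> (m, hi) \<in> U"
    using nth len by (auto simp: U_def)
  have "L \<le> n" "n \<le> 2 * L" "2 \<le> L"
    using split.prems unfolding L_def by auto
  consider "2 * k \<le> n" "2 * (L - k) \<le> n" | "n < 2 * k" | "n < 2 * (L - k)"
    by linarith
  then have "central_triangle U lo hi n"
  proof cases
    case 1
    have "tri_edge U lo hi lo m"
      using left \<open>0 < k\<close> by (cases "2 \<le> k") (auto simp: tri_edge_def m_def)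
    moreover have "tri_edge U lo hi m hi"
      using right \<open>k < L\<close> \<open>lo + L = hi\<close> by (cases "k + 2 \<le> L") (auto simp: tri_edge_def m_def)
    moreover have "tri_edge U lo hi lo hi"
      by (simp add: tri_edge_def)
    ultimately show ?thesis
      using 1 \<open>0 < k\<close> \<open>k < L\<close> \<open>lo + L = hi\<close> \<open>n \<le> 2 * L\<close> unfolding central_triangle_def
      by (intro exI[of _ lo] exI[of _ m] exI[of _ hi]) (auto simp: m_def)
  next
    case 2
    then have "2 \<le> k"
      using \<open>2 \<le> L\<close> \<open>L \<le> n\<close> by linarith
    then have "central_triangle A lo m n"
      using split.IH(1)[OF pieces(1)] 2 \<open>k < L\<close> \<open>L \<le> n\<close> by (simp add: m_def)
    then show ?thesis
      using \<open>A \<subseteq> U\<close> left[OF \<open>2 \<le> k\<close>]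
      by (rule central_triangle_mono) (use \<open>k < L\<close> \<open>lo + L = hi\<close> in \<open>simp_all add: m_def\<close>)
  next
    case 3
    then have "2 \<le> L - k"
      using \<open>2 \<le> L\<close> \<open>L \<le> n\<close> by linarith
    moreover have "hi - m = L - k"
      using \<open>lo + L = hi\<close> by (simp add: m_def)
    ultimately have "central_triangle B m hi n"
      using split.IH(2)[OF pieces(2)] 3 \<open>L \<le> n\<close> by simp
    moreover have "(m, hi) \<in> U"
      by (rule right) (use \<open>2 \<le> L - k\<close> in linarith)
    ultimately show ?thesis
      using central_triangle_mono[of B m hi n U lo hi] \<open>B \<subseteq> U\<close> by (simp add: m_def)
  qed
  then show ?case
    by (simp only: U_def)
qed

definition k_triangulable :: "(nat \<Rightarrow> nat \<Rightarrow> nat) \<Rightarrow> nat \<Rightarrow> nat \<Rightarrow> nat \<Rightarrow> bool" where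
  "k_triangulable d k lo hi \<longleftrightarrow> (\<exists>T. tri [lo..<Suc hi] T \<and> (\<forall>(i, j)\<in>T. d i j \<le> k))"

lemma k_triangulable_small: "hi - lo \<le> 2 \<Longrightarrow> k_triangulable d k lo hi"
  unfolding k_triangulable_def using tri.small[of "[lo..<Suc hi]"] by force

lemma k_triangulable_if_bounded:
  assumes "\<And>i j. i \<in> {lo..hi} \<Longrightarrow> j \<in> {lo..hi} \<Longrightarrow> d i j \<le> k"
  shows "k_triangulable d k lo hi"
proof -
  obtain T where "tri [lo..<Suc hi] T"
    using tri_exists by blast
  moreover from this have "T \<subseteq> {lo..hi} \<times> {lo..hi}"
    using tri_chords_subset by (fastforce simp del: upt_Suc)
  ultimately show ?thesis
    using assms unfolding k_triangulable_def by blast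
qed

lemma k_triangulable_split:
  assumes "lo < m" "m < hi" "3 \<le> hi - lo"
    and "k_triangulable d k lo m" "k_triangulable d k m hi"
    and "lo + 2 \<le> m \<Longrightarrow> d lo m \<le> k" "m + 2 \<le> hi \<Longrightarrow> d m hi \<le> k"
  shows "k_triangulable d k lo hi"
proof -
  obtain A B where "tri [lo..<Suc m] A" "\<forall>(i, j)\<in>A. d i j \<le> k"
      "tri [m..<Suc hi] B" "\<forall>(i, j)\<in>B. d i j \<le> k"
    using assms(4,5) unfolding k_triangulable_def by blast
  with tri_upt_split[OF assms(1-3)] show ?thesis
    using assms(6,7) unfolding k_triangulable_def
    by (intro exI[where x = "A \<union> B \<union> (if lo + 2 \<le> m then {(lo, m)} else {})
      \<union> (if m + 2 \<le> hi then {(m, hi)} else {})"]) auto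
qed

lemma has_k_triangulation_iff_k_triangulable:
  "has_k_triangulation G S k g n \<longleftrightarrow> k_triangulable (\<lambda>i j. word_dist G S (g i) (g j)) k 1 n"
  by (simp add: has_k_triangulation_def k_triangulable_def)

lemma has_k_triangulation_mono:
  "has_k_triangulation G S k g m \<Longrightarrow> k \<le> k' \<Longrightarrow> has_k_triangulation G S k' g m"
  unfolding has_k_triangulation_def by fastforce

section \<open>The Cayley graph\<close>

locale cayley_graph = group G for G (structure) +
  fixes S :: "'a set"
  assumes gens_carrier: "S \<subseteq> carrier G"
    and gens_inv_closed: "s \<in> S \<Longrightarrow> inv s \<in> S"
    and generate_gens: "generate G S = carrier G"
begin

lemma gens_closed [simp]: "s \<in> S \<Longrightarrow> s \<in> carrier G"
  using gens_carrier by blast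

lemma mult_inv_cancel_left [simp]: "x \<in> carrier G \<Longrightarrow> y \<in> carrier G \<Longrightarrow> x \<otimes> (inv x \<otimes> y) = y"
  by (simp add: m_assoc[symmetric])

lemma inv_mult_cancel_left [simp]: "x \<in> carrier G \<Longrightarrow> y \<in> carrier G \<Longrightarrow> inv x \<otimes> (x \<otimes> y) = y"
  by (simp add: m_assoc[symmetric])

lemma word_val_closed: "u \<in> lists S \<Longrightarrow> word_val G u \<in> carrier G"
  by (induction u) auto

lemma word_val_append:
  "u \<in> lists S \<Longrightarrow> v \<in> lists S \<Longrightarrow> word_val G (u @ v) = word_val G u \<otimes> word_val G v"
  by (induction u) (auto simp: m_assoc word_val_closed)

lemma word_val_rev_inv:
  "u \<in> lists S \<Longrightarrow> word_val G (rev (map (\<lambda>s. inv s) u)) = inv (word_val G u)"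
proof (induction u)
  case (Cons s u)
  then have "rev (map (\<lambda>s. inv s) u) \<in> lists S" "inv s \<in> S"
    using gens_inv_closed by auto
  with Cons show ?case
    by (simp add: word_val_append word_val_closed inv_mult_group)
qed simp

lemma exists_word_val: "x \<in> carrier G \<Longrightarrow> \<exists>u\<in>lists S. word_val G u = x"
  unfolding generate_gens[symmetric]
proof (induction rule: generate.induct)
  case one
  show ?case
    by (intro bexI[of _ "[]"]) auto
next
  case (incl h)
  then show ?case
    by (intro bexI[of _ "[h]"]) auto
next
  case (inv h)
  then show ?case
    using gens_inv_closed by (intro bexI[of _ "[inv h]"]) auto
next
  case (eng h1 h2)
  then obtain u v where "u \<in> lists S" "v \<in> lists S" "word_val G u = h1" "word_val G v = h2"
    by blast
  then show ?case
    by (intro bexI[of _ "u @ v"]) (auto simp: word_val_append)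
qed

lemma letter_val_in_gens: "x \<in> S \<times> UNIV \<Longrightarrow> letter_val G x \<in> S"
  using gens_inv_closed by (auto simp: letter_val_def)

lemma fword_val_closed: "w \<in> lists (S \<times> UNIV) \<Longrightarrow> fword_val G w \<in> carrier G"
  using letter_val_in_gens by (induction w) (auto simp del: lists_UNIV)

lemma fword_val_append:
  "u \<in> lists (S \<times> UNIV) \<Longrightarrow> v \<in> lists (S \<times> UNIV) \<Longrightarrow>
    fword_val G (u @ v) = fword_val G u \<otimes> fword_val G v"
proof (induction u)
  case (Cons x u)
  then have "letter_val G x \<in> carrier G"
    using letter_val_in_gens by auto
  with Cons show ?case
    by (simp add: m_assoc fword_val_closed del: lists_UNIV)
qed (simp add: fword_val_closed)

lemma fword_val_fword_inv:
  "w \<in> lists (S \<times> UNIV) \<Longrightarrow> fword_val G (fword_inv w) = inv (fword_val G w)"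
proof (induction w)
  case (Cons x w)
  then have x: "fst x \<in> S" and w: "w \<in> lists (S \<times> UNIV)"
    by auto
  have "fword_val G [(fst x, \<not> snd x)] = inv (letter_val G x)"
    using x by (auto simp: letter_val_def)
  moreover have "letter_val G x \<in> carrier G"
    using x by (auto simp: letter_val_def)
  ultimately show ?case
    using Cons.IH w x
    by (simp add: fword_val_append fword_val_closed inv_mult_group del: lists_UNIV)
qed simp

lemma fword_val_map_pos: "u \<in> lists S \<Longrightarrow> fword_val G (map (\<lambda>s. (s, True)) u) = word_val G u"
  by (induction u) (auto simp: letter_val_def)

lemma fword_val_append_fword_inv:
  assumes "u \<in> lists (S \<times> UNIV)" "v \<in> lists (S \<times> UNIV)" "fword_val G u = fword_val G v"
  shows "fword_val G (u @ fword_inv v) = \<one>"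
  using assms by (simp add: fword_val_append fword_val_fword_inv fword_val_closed del: lists_UNIV)

lemma word_dist_le:
  "u \<in> lists S \<Longrightarrow> word_val G u = inv g \<otimes> h \<Longrightarrow> word_dist G S g h \<le> length u"
  unfolding word_dist_def by (rule Least_le) blast

lemma word_dist_attained:
  assumes "g \<in> carrier G" "h \<in> carrier G"
  shows "\<exists>u\<in>lists S. length u = word_dist G S g h \<and> word_val G u = inv g \<otimes> h"
proof -
  obtain u where u: "u \<in> lists S" "word_val G u = inv g \<otimes> h"
    using exists_word_val[of "inv g \<otimes> h"] assms by auto
  have "\<exists>u'. u' \<in> lists S \<and> length u' = word_dist G S g h \<and> word_val G u' = inv g \<otimes> h"
    unfolding word_dist_def by (rule LeastI[of _ "length u"]) (use u in blast)
  then show ?thesis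
    by blast
qed

lemma word_dist_self: "g \<in> carrier G \<Longrightarrow> word_dist G S g g = 0"
  using word_dist_le[of "[]" g g] by simp

lemma word_dist_mult_gen: "g \<in> carrier G \<Longrightarrow> s \<in> S \<Longrightarrow> word_dist G S g (g \<otimes> s) \<le> 1"
  using word_dist_le[of "[s]" g "g \<otimes> s"] by (simp add: m_assoc[symmetric])

lemma word_dist_sym_le:
  assumes "g \<in> carrier G" "h \<in> carrier G"
  shows "word_dist G S g h \<le> word_dist G S h g"
proof -
  obtain u where u: "u \<in> lists S" "length u = word_dist G S h g" "word_val G u = inv h \<otimes> g"
    using word_dist_attained assms by blast
  have "rev (map (\<lambda>s. inv s) u) \<in> lists S"
    using u(1) gens_inv_closed by auto
  moreover have "word_val G (rev (map (\<lambda>s. inv s) u)) = inv g \<otimes> h"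
    using u assms by (simp add: word_val_rev_inv inv_mult_group)
  ultimately have "word_dist G S g h \<le> length (rev (map (\<lambda>s. inv s) u))"
    by (rule word_dist_le)
  then show ?thesis
    using u(2) by simp
qed

lemma word_dist_sym: "g \<in> carrier G \<Longrightarrow> h \<in> carrier G \<Longrightarrow> word_dist G S g h = word_dist G S h g"
  using word_dist_sym_le le_antisym by presburger

lemma word_dist_triangle:
  assumes "f \<in> carrier G" "g \<in> carrier G" "h \<in> carrier G"
  shows "word_dist G S f h \<le> word_dist G S f g + word_dist G S g h"
proof -
  obtain u where u: "u \<in> lists S" "length u = word_dist G S f g" "word_val G u = inv f \<otimes> g"
    using word_dist_attained assms by blast
  obtain v where v: "v \<in> lists S" "length v = word_dist G S g h" "word_val G v = inv g \<otimes> h"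
    using word_dist_attained assms by blast
  have "word_val G (u @ v) = inv f \<otimes> h"
    using u v assms by (simp add: word_val_append m_assoc)
  then show ?thesis
    using word_dist_le[of "u @ v"] u v by simp
qed

lemma is_cycle_carrier: "is_cycle G S g m \<Longrightarrow> i \<le> m \<Longrightarrow> g i \<in> carrier G"
  by (simp add: is_cycle_def)

lemma is_cycle_dist_arc:
  assumes "is_cycle G S g m" "i \<le> j" "j \<le> m"
  shows "word_dist G S (g i) (g j) \<le> j - i"
  using assms(2,3)
proof (induction j)
  case 0
  then show ?case
    using word_dist_self is_cycle_carrier[OF assms(1)] by simp
next
  case (Suc j)
  show ?case
  proof (cases "i = Suc j")
    case True
    then show ?thesis
      using word_dist_self is_cycle_carrier[OF assms(1)] Suc.prems by simp
  next
    case False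
    have "Suc j \<in> {1..m}"
      using Suc.prems by simp
    then obtain s where "s \<in> S" "g (Suc j) = g (Suc j - 1) \<otimes> s"
      using assms(1) unfolding is_cycle_def by blast
    then have "word_dist G S (g j) (g (Suc j)) \<le> 1"
      using word_dist_mult_gen is_cycle_carrier[OF assms(1)] Suc.prems by simp
    moreover have "word_dist G S (g i) (g j) \<le> j - i"
      using Suc False by simp
    ultimately show ?thesis
      using word_dist_triangle[of "g i" "g j" "g (Suc j)"] is_cycle_carrier[OF assms(1)] Suc.prems False
      by fastforce
  qed
qed

lemma is_cycle_dist_within:
  assumes "is_cycle G S g m" "i \<in> {lo..hi}" "j \<in> {lo..hi}" "hi \<le> m"
  shows "word_dist G S (g i) (g j) \<le> hi - lo"
proof (cases "i \<le> j")
  case True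
  then show ?thesis
    using is_cycle_dist_arc[OF assms(1) True] assms by fastforce
next
  case False
  then show ?thesis
    using is_cycle_dist_arc[OF assms(1), of j i] assms word_dist_sym is_cycle_carrier[OF assms(1)]
    by fastforce
qed

lemma is_cycle_dist_wrap:
  assumes "is_cycle G S g m" "b \<in> {1..m}"
  shows "word_dist G S (g 1) (g b) \<le> m - b + 1"
proof -
  have "g m = g 0" and carrier: "i \<le> m \<Longrightarrow> g i \<in> carrier G" for i
    using assms by (simp_all add: is_cycle_def)
  then have "word_dist G S (g b) (g 1) \<le> word_dist G S (g b) (g m) + word_dist G S (g 0) (g 1)"
    using assms word_dist_triangle[of "g b" "g m" "g 1"] by simp
  also have "\<dots> \<le> (m - b) + (1 - 0)"
    using is_cycle_dist_arc[OF assms(1), of b m] is_cycle_dist_arc[OF assms(1), of 0 1] assms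
    by (intro add_mono) simp_all
  finally show ?thesis
    using word_dist_sym carrier assms by simp
qed

lemma cycle_third_triangulation:
  assumes cycle: "is_cycle G S g m"
  shows "has_k_triangulation G S ((m + 2) div 3) g m"
proof -
  define q d where "q = (m + 2) div 3" and "d = (\<lambda>i j. word_dist G S (g i) (g j))"
  have arc: "k_triangulable d q lo hi" if "hi \<le> m" "hi - lo \<le> q" for lo hi
    using that is_cycle_dist_within[OF cycle] unfolding d_def
    by (intro k_triangulable_if_bounded) (meson le_trans)
  have arc_dist: "d i j \<le> j - i" if "i \<le> j" "j \<le> m" for i j
    using is_cycle_dist_arc[OF cycle that] by (simp add: d_def)
  have "k_triangulable d q 1 m"
  proof (cases "m \<le> 3")
    case True
    then show ?thesis
      by (intro k_triangulable_small) simp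
  next
    case False
    define b where "b = m + 1 - q"
    have q: "2 \<le> q" "m \<le> 3 * q" "3 * q \<le> m + 2"
      using False by (auto simp: q_def)
    have "k_triangulable d q 1 b"
    proof (cases "b \<le> 3")
      case True
      then show ?thesis
        by (intro k_triangulable_small) simp
    next
      case False
      then have "2 * q < m"
        using q by (simp add: b_def)
      then have "Suc q < b" "b \<le> m" "b - Suc q \<le> q"
        using q by (simp_all add: b_def)
      moreover from this have "d 1 (Suc q) \<le> q" "d (Suc q) b \<le> q"
        using arc_dist[of 1 "Suc q"] arc_dist[of "Suc q" b] by simp_all
      ultimately show ?thesis
        using False q arc[of "Suc q" 1] arc[of b "Suc q"]
        by (intro k_triangulable_split[of 1 "Suc q" b]) simp_all
    qed
    moreover have "1 < b" "b < m" "m - b \<le> q"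
      using q False by (simp_all add: b_def)
    moreover from this have "d 1 b \<le> q" "d b m \<le> q"
      using is_cycle_dist_wrap[OF cycle, of b] arc_dist[of b m] by (simp_all add: d_def b_def)
    ultimately show ?thesis
      using False arc[of m b] by (intro k_triangulable_split[of 1 b m]) simp_all
  qed
  then show ?thesis
    by (simp add: has_k_triangulation_iff_k_triangulable d_def q_def)
qed

end

section \<open>Areas of loops\<close>

definition short_relators :: "('a, 'b) monoid_scheme \<Rightarrow> 'a set \<Rightarrow> nat \<Rightarrow> 'a fword set" where
  "short_relators G S M = {r \<in> lists (S \<times> UNIV). length r \<le> M \<and> fword_val G r = \<one>\<^bsub>G\<^esub>}"

lemma finite_short_relators: "finite S \<Longrightarrow> finite (short_relators G S M)"
  unfolding short_relators_def
  by (rule finite_subset[OF _ finite_lists_length_le[of "S \<times> (UNIV :: bool set)" M]]) auto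

context cayley_graph
begin

lemma fword_val_segment:
  assumes "w \<in> lists (S \<times> UNIV)" "i \<le> j"
  shows "fword_val G (take (j - i) (drop i w)) = inv (fword_val G (take i w)) \<otimes> fword_val G (take j w)"
proof -
  have "take j w = take i w @ take (j - i) (drop i w)"
    using take_add[of i "j - i" w] assms(2) by simp
  moreover have "take i w \<in> lists (S \<times> UNIV)" "take (j - i) (drop i w) \<in> lists (S \<times> UNIV)"
    using assms(1) by (auto dest: in_set_takeD in_set_dropD)
  ultimately show ?thesis
    by (simp add: fword_val_append fword_val_closed del: lists_UNIV)
qed

lemma fword_val_take_closed: "w \<in> lists (S \<times> UNIV) \<Longrightarrow> fword_val G (take i w) \<in> carrier G"
  by (intro fword_val_closed) (auto dest: in_set_takeD)

lemma prefix_vals_is_cycle: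
  assumes "w \<in> lists (S \<times> UNIV)" "fword_val G w = \<one>" "w \<noteq> []"
  shows "is_cycle G S (\<lambda>i. fword_val G (take i w)) (length w)"
  unfolding is_cycle_def
proof (intro conjI allI impI ballI)
  fix i
  show "fword_val G (take i w) \<in> carrier G"
    using assms(1) by (rule fword_val_take_closed)
  assume i: "i \<in> {1..length w}"
  then have "w ! (i - 1) \<in> S \<times> UNIV"
    using assms(1) by (auto dest: nth_mem)
  then have "letter_val G (w ! (i - 1)) \<in> S"
    by (rule letter_val_in_gens)
  moreover have "take 1 (drop (i - 1) w) = [w ! (i - 1)]"
    using i by (subst Cons_nth_drop_Suc[symmetric]) auto
  then have "letter_val G (w ! (i - 1)) = inv (fword_val G (take (i - 1) w)) \<otimes> fword_val G (take i w)"
    using fword_val_segment[OF assms(1), of "i - 1" i] i \<open>letter_val G (w ! (i - 1)) \<in> S\<close> by simp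
  ultimately show "\<exists>s\<in>S. fword_val G (take i w) = fword_val G (take (i - 1) w) \<otimes> s"
    using fword_val_take_closed[OF assms(1)] by (intro bexI[of _ "letter_val G (w ! (i - 1))"]) simp_all
qed (use assms in \<open>auto simp: Suc_le_eq\<close>)

lemma exists_short_fword_between:
  assumes "g \<in> carrier G" "h \<in> carrier G" "word_dist G S g h \<le> e"
  shows "\<exists>u\<in>lists (S \<times> UNIV). length u \<le> e \<and> fword_val G u = inv g \<otimes> h"
proof -
  obtain u where "u \<in> lists S" "length u = word_dist G S g h" "word_val G u = inv g \<otimes> h"
    using word_dist_attained assms by blast
  then show ?thesis
    using assms(3) by (intro bexI[of _ "map (\<lambda>s. (s, True)) u"]) (auto simp: fword_val_map_pos)
qed

lemma cycle_central_triangle: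
  assumes cycle: "is_cycle G S g n" and "3 \<le> n" and "has_k_triangulation G S D g n"
  shows "\<exists>x y z. 1 \<le> x \<and> x < y \<and> y < z \<and> z \<le> n \<and>
    2 * (y - x) \<le> n \<and> 2 * (z - y) \<le> n \<and> n \<le> 2 * (z - x) \<and>
    word_dist G S (g x) (g y) \<le> max D 1 \<and> word_dist G S (g y) (g z) \<le> max D 1 \<and>
    word_dist G S (g x) (g z) \<le> max D 1"
proof -
  obtain T where T: "tri [1..<Suc n] T" "\<forall>(i, j)\<in>T. word_dist G S (g i) (g j) \<le> D"
    using assms(3) unfolding has_k_triangulation_def by blast
  have edge: "word_dist G S (g a) (g b) \<le> max D 1"
    if "tri_edge T 1 n a b" "1 \<le> a" "a < b" "b \<le> n" for a b
    using that(1) unfolding tri_edge_def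
  proof (elim disjE conjE)
    assume "(a, b) \<in> T"
    then show ?thesis
      using T(2) by fastforce
  next
    assume "a = 1" "b = n"
    then show ?thesis
      using is_cycle_dist_wrap[OF cycle, of n] that by simp
  next
    assume "b = Suc a"
    then show ?thesis
      using is_cycle_dist_arc[OF cycle, of a b] that by simp
  qed
  have "central_triangle T 1 n n"
    using assms(2) by (intro tri_central_triangle[OF T(1) refl]) auto
  then obtain x y z where "1 \<le> x" "x < y" "y < z" "z \<le> n"
    "2 * (y - x) \<le> n" "2 * (z - y) \<le> n" "n \<le> 2 * (z - x)"
    "tri_edge T 1 n x y" "tri_edge T 1 n y z" "tri_edge T 1 n x z"
    unfolding central_triangle_def
    by blast
  then show ?thesis
    using edge[of x y] edge[of y z] edge[of x z] by (intro exI[of _ x] exI[of _ y] exI[of _ z]) simp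
qed

text \<open>With w = w1 w2 w3 w4 cut at the points x, y, z, the four loops are
  w2 u^-1, w3 v^-1, w4 w1 t^-1 and t u v.\<close>
lemma area_le_triangle_split:
  assumes w: "w \<in> lists (S \<times> UNIV)" "fword_val G w = \<one>"
    and xyz: "x \<le> y" "y \<le> z" "z \<le> length w"
    and words: "u \<in> lists (S \<times> UNIV)" "v \<in> lists (S \<times> UNIV)" "t \<in> lists (S \<times> UNIV)"
  defines "p \<equiv> \<lambda>i. fword_val G (take i w)"
  assumes vals: "fword_val G u = inv (p x) \<otimes> p y" "fword_val G v = inv (p y) \<otimes> p z"
      "fword_val G t = inv (p z) \<otimes> p x"
    and short: "\<And>c. c \<in> lists (S \<times> UNIV) \<Longrightarrow> fword_val G c = \<one> \<Longrightarrow> length c \<le> L \<Longrightarrow> area_le S R c k"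
    and lens: "y - x + length u \<le> L" "z - y + length v \<le> L" "length w - (z - x) + length t \<le> L"
      "length t + length u + length v \<le> L"
  shows "area_le S R w (4 * k)"
proof -
  define seg where "seg i j = take (j - i) (drop i w)" for i j
  have seg_lists: "seg i j \<in> lists (S \<times> UNIV)" for i j
    using w(1) by (auto simp: seg_def dest: in_set_takeD in_set_dropD)
  have seg_val: "fword_val G (seg i j) = inv (p i) \<otimes> p j" if "i \<le> j" for i j
    using fword_val_segment[OF w(1) that] by (simp add: seg_def p_def)
  have p_carrier: "p i \<in> carrier G" for i
    using fword_val_take_closed[OF w(1)] by (simp add: p_def)
  have "w = seg 0 x @ seg x y @ seg y z @ seg z (length w)"
    using xyz by (simp add: seg_def) (metis append.assoc append_take_drop_id le_add_diff_inverse
      take_add)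
  moreover have "area_le S R (seg x y @ fword_inv u) k"
    using xyz seg_val p_carrier vals lens words seg_lists
    by (intro short) (auto simp: fword_val_append_fword_inv seg_def)
  moreover have "area_le S R (seg y z @ fword_inv v) k"
    using xyz seg_val p_carrier vals lens words seg_lists
    by (intro short) (auto simp: fword_val_append_fword_inv seg_def)
  moreover have "area_le S R (seg z (length w) @ seg 0 x @ fword_inv t) k"
  proof (rule short)
    have "fword_val G (seg z (length w) @ seg 0 x) = inv (p z) \<otimes> p x"
      using xyz seg_val[of z "length w"] seg_val[of 0 x] w(2) p_carrier
      by (simp add: fword_val_append seg_lists p_def del: lists_UNIV)
    then show "fword_val G (seg z (length w) @ seg 0 x @ fword_inv t) = \<one>"
      using fword_val_append_fword_inv[of "seg z (length w) @ seg 0 x" t] vals words seg_lists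
      by simp
    show "seg z (length w) @ seg 0 x @ fword_inv t \<in> lists (S \<times> UNIV)"
      using seg_lists words(3) by (simp del: lists_UNIV)
    show "length (seg z (length w) @ seg 0 x @ fword_inv t) \<le> L"
      using xyz lens by (simp add: seg_def)
  qed
  moreover have "area_le S R (t @ u @ v) k"
    using vals words lens p_carrier
    by (intro short) (simp_all add: fword_val_append m_assoc del: lists_UNIV)
  ultimately have "area_le S R w (k + k + k + k)"
    using area_le_triangle[of "seg 0 x" S u v R "seg x y" k "seg y z" k "seg z (length w)" t k k]
      seg_lists words by simp
  then show ?thesis
    by (rule area_le_mono) simp
qed

lemma area_le_loop_step:
  assumes w: "w \<in> lists (S \<times> UNIV)" "fword_val G w = \<one>" "4 \<le> length w"
    and D: "3 * D < length w" "has_k_triangulation G S D (\<lambda>i. fword_val G (take i w)) (length w)"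
    and shorter: "\<And>c. c \<in> lists (S \<times> UNIV) \<Longrightarrow> fword_val G c = \<one> \<Longrightarrow> length c < length w \<Longrightarrow>
      area_le S R c k"
  shows "area_le S R w (4 * k)"
proof -
  define n g e where "n = length w" and "g = (\<lambda>i. fword_val G (take i w))" and "e = max D 1"
  have cycle: "is_cycle G S g n"
    using prefix_vals_is_cycle[OF w(1,2)] w(3) unfolding g_def n_def by fastforce
  have "3 * e < n"
    using D(1) w(3) by (simp add: e_def n_def)
  obtain x y z where xyz: "1 \<le> x" "x < y" "y < z" "z \<le> n"
      "2 * (y - x) \<le> n" "2 * (z - y) \<le> n" "n \<le> 2 * (z - x)"
    and dist: "word_dist G S (g x) (g y) \<le> e" "word_dist G S (g y) (g z) \<le> e"
      "word_dist G S (g x) (g z) \<le> e"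
    using cycle_central_triangle[OF cycle _ D(2)[folded g_def n_def]] w(3)
    unfolding e_def n_def by fastforce
  have carrier: "g i \<in> carrier G" for i
    using fword_val_take_closed[OF w(1)] by (simp add: g_def)
  obtain u v t where words: "u \<in> lists (S \<times> UNIV)" "v \<in> lists (S \<times> UNIV)" "t \<in> lists (S \<times> UNIV)"
    and "length u \<le> e" "length v \<le> e" "length t \<le> e"
    and vals: "fword_val G u = inv (g x) \<otimes> g y" "fword_val G v = inv (g y) \<otimes> g z"
      "fword_val G t = inv (g z) \<otimes> g x"
    using exists_short_fword_between[OF carrier carrier dist(1)] exists_short_fword_between[OF carrier carrier dist(2)]
      exists_short_fword_between[of "g z" "g x" e] dist(3) word_dist_sym carrier by metis
  show ?thesis
    using w xyz words vals \<open>3 * e < n\<close> \<open>length u \<le> e\<close> \<open>length v \<le> e\<close> \<open>length t \<le> e\<close> shorter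
    by (intro area_le_triangle_split[of w x y z u v t "n - 1"]) (auto simp: g_def n_def)
qed

lemma area_le_exponential:
  assumes "4 \<le> M"
    and triangulable: "\<And>n g. M < n \<Longrightarrow> is_cycle G S g n \<Longrightarrow> \<exists>D. 3 * D < n \<and> has_k_triangulation G S D g n"
  shows "w \<in> lists (S \<times> UNIV) \<Longrightarrow> fword_val G w = \<one> \<Longrightarrow>
    area_le S (short_relators G S M) w (4 ^ length w)"
proof (induction "length w" arbitrary: w rule: less_induct)
  case less
  show ?case
  proof (cases "length w \<le> M")
    case True
    then have "area_le S (short_relators G S M) w 1"
      using less.prems by (intro area_le_relator) (simp add: short_relators_def)
    then show ?thesis
      by (rule area_le_mono) simp
  next
    case False
    obtain D where "3 * D < length w" "has_k_triangulation G S D (\<lambda>i. fword_val G (take i w)) (length w)"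
    proof -
      have "w \<noteq> []"
        using False \<open>4 \<le> M\<close> by auto
      then show ?thesis
        using triangulable[OF _ prefix_vals_is_cycle[OF less.prems]] False that by auto
    qed
    moreover have "area_le S (short_relators G S M) c (4 ^ (length w - 1))"
      if "c \<in> lists (S \<times> UNIV)" "fword_val G c = \<one>" "length c < length w" for c
      using less.hyps[OF that(3) that(1,2)] by (rule area_le_mono) (use that(3) in simp)
    ultimately have "area_le S (short_relators G S M) w (4 * 4 ^ (length w - 1))"
      using less.prems False \<open>4 \<le> M\<close> by (intro area_le_loop_step) auto
    also have "4 * 4 ^ (length w - 1) = (4::nat) ^ length w"
      using False \<open>4 \<le> M\<close> by (cases "length w") simp_all
    finally show ?thesis .
  qed
qed

section \<open>Bounds on \<Delta>\<close>

lemma cycles_upto_third_triangulable: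
  "\<forall>m g. 1 \<le> m \<and> m \<le> n \<and> is_cycle G S g m \<longrightarrow> has_k_triangulation G S ((n + 2) div 3) g m"
  using cycle_third_triangulation has_k_triangulation_mono div_le_mono by (meson add_le_mono1)

lemma Delta_le_ceiling_third: "3 * Delta G S n \<le> n + 2"
proof -
  have "Delta G S n \<le> (n + 2) div 3"
    unfolding Delta_def by (rule Least_le) (rule cycles_upto_third_triangulable)
  then show ?thesis
    by linarith
qed

lemma has_Delta_triangulation:
  assumes "is_cycle G S g m" "m \<le> n"
  shows "has_k_triangulation G S (Delta G S n) g m"
proof -
  have "\<forall>m g. 1 \<le> m \<and> m \<le> n \<and> is_cycle G S g m \<longrightarrow> has_k_triangulation G S (Delta G S n) g m"
    unfolding Delta_def by (rule LeastI) (rule cycles_upto_third_triangulable)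
  then show ?thesis
    using assms by (auto simp: is_cycle_def)
qed

lemma finitely_presented_if_Delta_small:
  assumes "finite S" and small: "\<And>n. N \<le> n \<Longrightarrow> 3 * Delta G S n < n"
  shows "\<exists>R. finite R \<and> is_presentation G S R \<and>
    (\<forall>w\<in>lists S. word_val G w = \<one> \<longrightarrow> area_le S R (map (\<lambda>s. (s, True)) w) (4 ^ length w))"
proof (intro exI conjI)
  define M where "M = max N 4"
  have "4 \<le> M"
    by (simp add: M_def)
  moreover have "\<exists>D. 3 * D < n \<and> has_k_triangulation G S D g n"
    if "M < n" "is_cycle G S g n" for n g
    using small[of n] has_Delta_triangulation[OF that(2)] that(1) by (auto simp: M_def)
  ultimately have area: "area_le S (short_relators G S M) w (4 ^ length w)"
    if "w \<in> lists (S \<times> UNIV)" "fword_val G w = \<one>" for w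
    using area_le_exponential that by blast
  show "finite (short_relators G S M)"
    using assms(1) by (rule finite_short_relators)
  show "is_presentation G S (short_relators G S M)"
    unfolding is_presentation_def using area by (auto simp: short_relators_def area_le_def)
  show "\<forall>w\<in>lists S. word_val G w = \<one> \<longrightarrow>
      area_le S (short_relators G S M) (map (\<lambda>s. (s, True)) w) (4 ^ length w)"
  proof (intro ballI impI)
    fix w
    assume "w \<in> lists S" "word_val G w = \<one>"
    moreover from this have "map (\<lambda>s. (s, True)) w \<in> lists (S \<times> UNIV)"
      by (induction w) auto
    ultimately show "area_le S (short_relators G S M) (map (\<lambda>s. (s, True)) w) (4 ^ length w)"
      using area[of "map (\<lambda>s. (s, True)) w"] by (simp add: fword_val_map_pos)
  qed
qed

end

lemma int_le_ceiling_third_iff: "int k \<le> \<lceil>real n / 3\<rceil> \<longleftrightarrow> 3 * k \<le> n + 2"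
  by (simp add: le_ceiling_iff field_simps) linarith

lemma int_less_ceiling_third_iff: "int k < \<lceil>real n / 3\<rceil> \<longleftrightarrow> 3 * k < n"
  by (simp add: less_ceiling_iff field_simps) linarith

theorem theoremA:
  fixes G :: "('a, 'b) monoid_scheme" and S :: "'a set"
  assumes "group G" and "finite S" and "S \<subseteq> carrier G"
    and "\<forall>s\<in>S. inv\<^bsub>G\<^esub> s \<in> S" and "generate G S = carrier G"
  shows "(\<forall>n\<ge>1. int (Delta G S n) \<le> \<lceil>real n / 3\<rceil>) \<and>
         ((\<exists>N. \<forall>n\<ge>N. int (Delta G S n) < \<lceil>real n / 3\<rceil>) \<longrightarrow>
            (\<exists>R (c::real). finite R \<and> is_presentation G S R \<and>
               (\<forall>w\<in>lists S. word_val G w = \<one>\<^bsub>G\<^esub> \<longrightarrow>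
                  (\<exists>cs. conj_list_over S R cs \<and> real (length cs) \<le> c ^ length w \<and>
                        free_equiv (map (\<lambda>s. (s, True)) w) (conj_prod cs)))))"
proof -
  interpret cayley_graph G S
    by (rule cayley_graph.intro[OF assms(1)], unfold_locales) (use assms in auto)
  show ?thesis
  proof (intro conjI allI impI)
    show "int (Delta G S n) \<le> \<lceil>real n / 3\<rceil>" for n
      using Delta_le_ceiling_third int_le_ceiling_third_iff by blast
  next
    assume "\<exists>N. \<forall>n\<ge>N. int (Delta G S n) < \<lceil>real n / 3\<rceil>"
    then obtain N where "\<And>n. N \<le> n \<Longrightarrow> 3 * Delta G S n < n"
      by (auto simp: int_less_ceiling_third_iff)
    then obtain R where "finite R" "is_presentation G S R" and area:
      "\<forall>w\<in>lists S. word_val G w = \<one>\<^bsub>G\<^esub> \<longrightarrow> area_le S R (map (\<lambda>s. (s, True)) w) (4 ^ length w)"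
      using finitely_presented_if_Delta_small[OF assms(2)] by blast
    then show "\<exists>R (c::real). finite R \<and> is_presentation G S R \<and>
        (\<forall>w\<in>lists S. word_val G w = \<one>\<^bsub>G\<^esub> \<longrightarrow>
          (\<exists>cs. conj_list_over S R cs \<and> real (length cs) \<le> c ^ length w \<and>
            free_equiv (map (\<lambda>s. (s, True)) w) (conj_prod cs)))"
      using area_le_real_power[of S R _ 4] by (intro exI[of _ R] exI[of _ "4::real"]) auto
  qed
qed

end
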